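(* Let $n$ be a positive odd integer. Then, modulo $\Phi_n(q)$, \[ \sum_{k=0}^{n-1}\frac{(q;q^4)_k^2}{(q^4;q^4)_k^2}(-q)^{k} \equiv\begin{cases} \dfrac{(q,q^2,-q^3,-q^4;q^4)_{(n-1)/8}}{(q^4;q^4)_{(n-1)/4}}\,q^{(1-n^2)/8} &\text{if } n\equiv 1\pmod 8,\\[8pt] \dfrac{(q,q^2,-q^3,-q^4;q^4)_{(3n-1)/8}}{(q^4;q^4)_{(3n-1)/4}}\,q^{(1-n^2)/8} &\text{if } n\equiv 3\pmod 8,\\[8pt] -\dfrac{(1-q^2)(-q^3,-q^4,q^5,q^6;q^4)_{(n-5)/8}}{(q^4;q^4)_{(n-5)/4}}\,q^{(9-n^2)/8} &\text{if } n\equiv 5\pmod 8,\\[8pt] -\dfrac{(1-q^2)(-q^3,-q^4,q^5,q^6;q^4)_{(3n-5)/8}}{(q^4;q^4)_{(3n-5)/4}}\,q^{(9-n^2)/8} &\text{if } n\equiv 7\pmod 8. \end{cases} \]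
   Context: For an indeterminate $a$ and a nonnegative integer $k$, $(a;q)_k=\prod_{j=0}^{k-1}(1-aq^j)$, with $(a;q)_0=1$, and $(a_1,\dots,a_m;q)_k=(a_1;q)_k\cdots(a_m;q)_k$. $\Phi_n(q)=\prod_{1\le j\le n,\ \gcd(j,n)=1}(q-e^{2\pi i j/n})$ is the $n$-th cyclotomic polynomial. A congruence between rational functions in $q$ (possibly involving negative powers of $q$) modulo a polynomial $P(q)$ means that the difference, written as a ratio of polynomials with denominator coprime to $P(q)$, has numerator divisible by $P(q)$. *)

theory Defs
  imports Complex_Main "HOL-Computational_Algebra.Polynomial_Factorial"
          "HOL-Computational_Algebra.Fraction_Field"
begin

type_synonym ratfun = "complex poly fract"

definition qvar :: ratfun where
  "qvar = Fract [:0, 1:] 1"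

definition qpoch :: "ratfun \<Rightarrow> ratfun \<Rightarrow> nat \<Rightarrow> ratfun" where
  "qpoch a b k = (\<Prod>j<k. (1 - a * b ^ j))"

definition cyclotomic :: "nat \<Rightarrow> complex poly" where
  "cyclotomic n = (\<Prod>j\<in>{j. 1 \<le> j \<and> j \<le> n \<and> coprime j n}.
      [:- cis (2 * pi * real j / real n), 1:])"

definition ratfun_cong :: "ratfun \<Rightarrow> ratfun \<Rightarrow> complex poly \<Rightarrow> bool" where
  "ratfun_cong x y P \<longleftrightarrow>
     (\<exists>A B. B \<noteq> 0 \<and> x - y = Fract A B \<and> coprime B P \<and> P dvd A)"

end

(* Both sides are evaluated at a primitive n-th root of unity z; write p = z^4 and r = -z^2.
   For the M with 4M + 1 equal to n or 3n we have z p^M = 1, so the sum stops after the term k = M.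
   By the finite q-binomial theorem, z^(2M^2) times its k-th term is the product of the coefficients
   of x^k and x^(M-k) in prod_{j<M} (1 - p^j x) and prod_{j<M} (1 - r p^j x).  As r^2 = p, the
   product of these polynomials is prod_{i<2M} (1 - r^i x), whose coefficient of x^M gives the sum
   as (r;r)_2M / (r;r)_M^2, up to a sign and a power of z.  Splitting (r;r) into its even and odd
   factors and reversing the order of factors in the resulting products (using z^n = 1) yields the
   closed forms for M even and M odd.  Finally, the difference of the two sides of the congruence
   is a quotient of polynomials whose denominator vanishes at no primitive n-th root of unity while
   its numerator vanishes at all of them; hence Phi_n divides the numerator. *)
theory Submission
  imports Defs "HOL-Computational_Algebra.Field_as_Ring"
begin

section \<open>q-Pochhammer symbols\<close>

lemma power_power_swap: "((x::'a::monoid_mult) ^ m) ^ n = (x ^ n) ^ m"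
  unfolding power_mult [symmetric] mult.commute [of m n] ..

lemma prod_lessThan_double: "(\<Prod>i<2 * (k::nat). f i) = (\<Prod>j<k. f (2 * j) * f (2 * j + 1))"
  by (induction k) (simp_all add: algebra_simps)

definition triangular :: "nat \<Rightarrow> nat" where
  "triangular k = (\<Sum>j<k. j)"

lemma triangular_0 [simp]: "triangular 0 = 0"
  by (simp add: triangular_def)

lemma triangular_Suc: "triangular (Suc k) = triangular k + k"
  by (simp add: triangular_def)

lemma double_triangular: "2 * triangular k + k = k * k"
  by (induction k) (auto simp: triangular_Suc algebra_simps)

lemma minus_one_power_triangular:
  "(- 1 :: 'a::ring_1) ^ triangular (2 * K + 1) = (- 1) ^ K"
  "(- 1 :: 'a::ring_1) ^ triangular (2 * K + 2) = - ((- 1) ^ K)"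
proof -
  have "2 * triangular (2 * K + 1) = 2 * (2 * (K * K) + K)"
    and "2 * triangular (2 * K + 2) = 2 * (2 * (K * K + K) + K + 1)"
    using double_triangular [of "2 * K + 1"] double_triangular [of "2 * K + 2"]
    by (simp_all add: algebra_simps)
  then have "triangular (2 * K + 1) = 2 * (K * K) + K"
    and "triangular (2 * K + 2) = 2 * (K * K + K) + K + 1"
    by simp_all
  then show "(- 1 :: 'a) ^ triangular (2 * K + 1) = (- 1) ^ K"
    and "(- 1 :: 'a) ^ triangular (2 * K + 2) = - ((- 1) ^ K)"
    by (simp_all add: power_add power_mult)
qed

definition qpochhammer :: "'a::comm_ring_1 \<Rightarrow> 'a \<Rightarrow> nat \<Rightarrow> 'a" where
  "qpochhammer a b k = (\<Prod>j<k. 1 - a * b ^ j)"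

lemma qpoch_eq_qpochhammer: "qpoch = qpochhammer"
  by (simp add: fun_eq_iff qpoch_def qpochhammer_def)

lemma qpochhammer_0 [simp]: "qpochhammer a b 0 = 1"
  by (simp add: qpochhammer_def)

lemma qpochhammer_Suc: "qpochhammer a b (Suc k) = qpochhammer a b k * (1 - a * b ^ k)"
  by (simp add: qpochhammer_def)

lemma qpochhammer_add:
  "qpochhammer a b (k + l) = qpochhammer a b k * qpochhammer (a * b ^ k) b l"
  by (induction l) (simp_all add: qpochhammer_Suc power_add mult.assoc)

lemma qpochhammer_Suc_left: "qpochhammer a b (Suc k) = (1 - a) * qpochhammer (a * b) b k"
  using qpochhammer_add [of a b "Suc 0" k] by (simp add: qpochhammer_Suc)

lemma qpochhammer_double:
  "qpochhammer a a (2 * k) = qpochhammer a (a\<^sup>2) k * qpochhammer (a\<^sup>2) (a\<^sup>2) k"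
proof -
  have "qpochhammer a a (2 * k) = (\<Prod>j<k. (1 - a * a ^ (2 * j)) * (1 - a * a ^ (2 * j + 1)))"
    unfolding qpochhammer_def by (rule prod_lessThan_double)
  also have "\<dots> = (\<Prod>j<k. (1 - a * (a\<^sup>2) ^ j) * (1 - a\<^sup>2 * (a\<^sup>2) ^ j))"
    by (simp add: power_mult power2_eq_square algebra_simps)
  finally show ?thesis
    by (simp add: qpochhammer_def prod.distrib)
qed

lemma qpochhammer_mult_uminus:
  "qpochhammer a b k * qpochhammer (- a) b k = qpochhammer (a\<^sup>2) (b\<^sup>2) k"
  unfolding qpochhammer_def prod.distrib [symmetric]
  by (rule prod.cong) (simp_all add: power_mult power2_eq_square algebra_simps)

lemma qpochhammer_self_nonzero:
  fixes x :: "'a::idom"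
  assumes "\<And>j. 0 < j \<Longrightarrow> j \<le> k \<Longrightarrow> x ^ j \<noteq> 1"
  shows "qpochhammer x x k \<noteq> 0"
  using assms by (auto simp: qpochhammer_def simp flip: power_Suc)

text \<open>The hypothesis is \<open>x y b ^ (K - 1) = 1\<close>, stated without truncated subtraction.\<close>
lemma qpochhammer_reverse:
  fixes x y b :: "'a::idom"
  assumes "b \<noteq> 0" and "x * y * b ^ K = b"
  shows "qpochhammer x b K * (y ^ K * b ^ triangular K) = (- 1) ^ K * qpochhammer y b K"
proof -
  have geom: "(\<Prod>i<K. y * b ^ i) = y ^ K * b ^ triangular K"
    by (induction K) (simp_all add: triangular_Suc power_add algebra_simps)
  have factor: "(1 - x * b ^ (K - Suc i)) * (y * b ^ i) = - (1 - y * b ^ i)" if "i < K" for i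
  proof -
    have "(x * b ^ (K - Suc i) * y * b ^ i) * b = x * y * b ^ K"
      using that by (simp add: algebra_simps flip: power_add power_Suc)
    then have "x * b ^ (K - Suc i) * y * b ^ i = 1"
      using assms by simp
    then show ?thesis
      by (simp add: algebra_simps)
  qed
  have "qpochhammer x b K = (\<Prod>i<K. 1 - x * b ^ (K - Suc i))"
    unfolding qpochhammer_def
    by (rule prod.reindex_bij_witness [where i = "\<lambda>i. K - Suc i" and j = "\<lambda>i. K - Suc i"]) auto
  then have "qpochhammer x b K * (y ^ K * b ^ triangular K)
      = (\<Prod>i<K. 1 - x * b ^ (K - Suc i)) * (\<Prod>i<K. y * b ^ i)"
    by (simp only: geom)
  also have "\<dots> = (\<Prod>i<K. (1 - x * b ^ (K - Suc i)) * (y * b ^ i))"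
    by (rule prod.distrib [symmetric])
  also have "\<dots> = (\<Prod>i<K. - 1 * (1 - y * b ^ i))"
    by (rule prod.cong) (simp_all add: factor)
  finally show ?thesis
    by (simp only: prod.distrib prod_constant card_lessThan qpochhammer_def)
qed

section \<open>The finite q-binomial theorem\<close>

lemma prod_power_diff_qpochhammer:
  fixes p :: "'a::comm_ring_1"
  assumes "k \<le> N"
  shows "(\<Prod>j<k. p ^ N - p ^ j) * qpochhammer p p (N - k)
    = (- 1) ^ k * p ^ triangular k * qpochhammer p p N"
  using assms
proof (induction k)
  case (Suc k)
  then obtain m where N: "N = Suc k + m"
    by (metis le_iff_add)
  have "p ^ N - p ^ k = - (p ^ k * (1 - p * p ^ m))"
    by (simp add: N algebra_simps power_add)
  then have "(\<Prod>j<Suc k. p ^ N - p ^ j) * qpochhammer p p (N - Suc k)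
      = - (p ^ k) * ((\<Prod>j<k. p ^ N - p ^ j) * qpochhammer p p (N - k))"
    by (simp add: N qpochhammer_Suc algebra_simps)
  also have "\<dots> = (- 1) ^ Suc k * p ^ triangular (Suc k) * qpochhammer p p N"
    using Suc by (simp add: triangular_Suc power_add algebra_simps)
  finally show ?case .
qed simp

lemma coeff_prod_linear_qpochhammer:
  fixes c p :: "'a::comm_ring_1"
  shows "coeff (\<Prod>j<N. [:1, - (c * p ^ j):]) k * qpochhammer p p k
    = c ^ k * (\<Prod>j<k. p ^ N - p ^ j)"
proof (induction N arbitrary: k)
  case 0
  then show ?case
    by (cases k) (simp_all del: prod.lessThan_Suc add: prod.lessThan_Suc_shift)
next
  case (Suc N)
  let ?P = "\<Prod>j<N. [:1, - (c * p ^ j):]"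
  have step: "(\<Prod>j<Suc N. [:1, - (c * p ^ j):]) = ?P * [:1, - (c * p ^ N):]"
    by simp
  show ?case
  proof (cases k)
    case 0
    then show ?thesis
      using Suc.IH [of 0] by (simp add: step mult_pCons_right)
  next
    case (Suc i)
    have shift: "(\<Prod>j<Suc i. p ^ Suc N - p ^ j) = (p ^ Suc N - 1) * p ^ i * (\<Prod>j<i. p ^ N - p ^ j)"
    proof -
      have "(\<Prod>j<i. p ^ Suc N - p ^ Suc j) = (\<Prod>j<i. p * (p ^ N - p ^ j))"
        by (simp add: algebra_simps)
      then show ?thesis
        by (simp del: prod.lessThan_Suc add: prod.lessThan_Suc_shift prod.distrib mult.assoc)
    qed
    have "coeff (\<Prod>j<Suc N. [:1, - (c * p ^ j):]) k * qpochhammer p p k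
        = coeff ?P (Suc i) * qpochhammer p p (Suc i)
          - c * p ^ N * (coeff ?P i * qpochhammer p p i) * (1 - p * p ^ i)"
      by (simp add: step mult_pCons_right Suc qpochhammer_Suc algebra_simps)
    also have "\<dots> = c ^ Suc i * (\<Prod>j<i. p ^ N - p ^ j) * (p ^ N - p ^ i)
        - c * p ^ N * (c ^ i * (\<Prod>j<i. p ^ N - p ^ j)) * (1 - p * p ^ i)"
      by (simp add: Suc.IH)
    also have "\<dots> = c ^ Suc i * ((p ^ Suc N - 1) * p ^ i * (\<Prod>j<i. p ^ N - p ^ j))"
      by (simp add: algebra_simps)
    also have "\<dots> = c ^ k * (\<Prod>j<k. p ^ Suc N - p ^ j)"
      by (simp only: Suc shift)
    finally show ?thesis .
  qed
qed

theorem q_binomial: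
  fixes c p :: "'a::comm_ring_1"
  assumes "k \<le> N"
  shows "coeff (\<Prod>j<N. [:1, - (c * p ^ j):]) k * qpochhammer p p k * qpochhammer p p (N - k)
    = (- c) ^ k * p ^ triangular k * qpochhammer p p N"
  using prod_power_diff_qpochhammer [OF assms, of p]
  by (simp add: coeff_prod_linear_qpochhammer mult.assoc power_minus')

lemma qpochhammer_reciprocal_power:
  fixes z p :: "'a::comm_ring_1"
  assumes "z * p ^ N = 1" and "k \<le> N"
  shows "qpochhammer z p k * qpochhammer p p (N - k)
    = (- z) ^ k * p ^ triangular k * qpochhammer p p N"
proof -
  have "qpochhammer z p k = (\<Prod>j<k. z * (p ^ N - p ^ j))"
    unfolding qpochhammer_def using assms(1) by (intro prod.cong) (simp_all add: algebra_simps)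
  then show ?thesis
    using prod_power_diff_qpochhammer [OF assms(2), of p]
    by (simp add: prod.distrib mult.assoc power_minus')
qed

section \<open>The sum at a root of unity\<close>

definition qsum :: "'a::field \<Rightarrow> nat \<Rightarrow> 'a" where
  "qsum q N = (\<Sum>k<N. (qpochhammer q (q ^ 4) k)\<^sup>2 / (qpochhammer (q ^ 4) (q ^ 4) k)\<^sup>2 * (- q) ^ k)"

lemma qsum_term_power_identity:
  fixes z :: "'a::comm_ring_1"
  assumes root: "z ^ (4 * M + 1) = 1" and M: "M = k + m"
  shows "z ^ (2 * M * M) * (((- z) ^ k)\<^sup>2 * (- z) ^ k) * ((z ^ 4) ^ triangular k)\<^sup>2
    = (- 1) ^ k * (z ^ 4) ^ triangular k * ((z\<^sup>2) ^ m * (z ^ 4) ^ triangular m)"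
proof -
  have exponent: "2 * M * M + 3 * k + 4 * triangular k * 2
      = 2 * m + 4 * triangular k + 4 * triangular m + (4 * M + 1) * k"
    using double_triangular [of k] double_triangular [of m] by (simp add: M algebra_simps)
  have "z ^ (2 * M * M) * z ^ (3 * k) * (z ^ (4 * triangular k))\<^sup>2
      = z ^ (2 * M * M + 3 * k + 4 * triangular k * 2)"
    by (simp only: power_add power_mult)
  also have "\<dots> = z ^ (2 * m) * z ^ (4 * triangular k) * z ^ (4 * triangular m)
      * (z ^ (4 * M + 1)) ^ k"
    by (simp only: exponent power_add power_mult)
  finally have power_eq: "z ^ (2 * M * M) * z ^ (3 * k) * (z ^ (4 * triangular k))\<^sup>2
      = z ^ (2 * m) * z ^ (4 * triangular k) * z ^ (4 * triangular m)"
    using root by simp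
  have "((- z) ^ k)\<^sup>2 * (- z) ^ k = (- (z ^ 3)) ^ k"
    by (simp add: power2_eq_square power3_eq_cube flip: power_mult_distrib)
  then have sign: "((- z) ^ k)\<^sup>2 * (- z) ^ k = (- 1) ^ k * z ^ (3 * k)"
    by (simp add: power_minus' power_mult)
  have "z ^ (2 * M * M) * (((- z) ^ k)\<^sup>2 * (- z) ^ k) * ((z ^ 4) ^ triangular k)\<^sup>2
      = (- 1) ^ k * (z ^ (2 * M * M) * z ^ (3 * k) * (z ^ (4 * triangular k))\<^sup>2)"
    unfolding sign by (simp only: power_mult [symmetric] ac_simps)
  also have "\<dots> = (- 1) ^ k * (z ^ 4) ^ triangular k * ((z\<^sup>2) ^ m * (z ^ 4) ^ triangular m)"
    unfolding power_eq by (simp only: power_mult [symmetric] ac_simps)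
  finally show ?thesis .
qed

lemma qsum_term_root_of_unity:
  fixes z :: "'a::field"
  defines "p \<equiv> z ^ 4" and "r \<equiv> - (z\<^sup>2)"
  assumes root: "z ^ (4 * M + 1) = 1" and "k \<le> M"
    and nonzero: "qpochhammer p p k \<noteq> 0" "qpochhammer p p (M - k) \<noteq> 0"
  shows "z ^ (2 * M * M) * ((qpochhammer z p k)\<^sup>2 / (qpochhammer p p k)\<^sup>2 * (- z) ^ k)
    = coeff (\<Prod>j<M. [:1, - (1 * p ^ j):]) k * coeff (\<Prod>j<M. [:1, - (r * p ^ j):]) (M - k)"
proof -
  define m where "m = M - k"
  have M: "M = k + m"
    using \<open>k \<le> M\<close> by (simp add: m_def)
  have "z * p ^ M = 1"
    using root by (simp add: p_def flip: power_mult power_Suc)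
  then have qz: "qpochhammer z p k
      = (- z) ^ k * p ^ triangular k * qpochhammer p p M / qpochhammer p p m"
    using qpochhammer_reciprocal_power \<open>k \<le> M\<close> nonzero by (simp add: m_def field_simps)
  have cA: "coeff (\<Prod>j<M. [:1, - (1 * p ^ j):]) k
      = (- 1) ^ k * p ^ triangular k * qpochhammer p p M / (qpochhammer p p k * qpochhammer p p m)"
    using q_binomial [of k M 1 p] \<open>k \<le> M\<close> nonzero by (simp add: m_def field_simps)
  have "coeff (\<Prod>j<M. [:1, - (r * p ^ j):]) m * qpochhammer p p m * qpochhammer p p k
      = (- r) ^ m * p ^ triangular m * qpochhammer p p M"
    using q_binomial [of m M r p] by (simp add: M)
  then have cB: "coeff (\<Prod>j<M. [:1, - (r * p ^ j):]) m
      = (- r) ^ m * p ^ triangular m * qpochhammer p p M / (qpochhammer p p k * qpochhammer p p m)"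
    using nonzero by (simp add: m_def field_simps)
  define D where "D = (qpochhammer p p M)\<^sup>2 / ((qpochhammer p p k)\<^sup>2 * (qpochhammer p p m)\<^sup>2)"
  have "z ^ (2 * M * M) * ((qpochhammer z p k)\<^sup>2 / (qpochhammer p p k)\<^sup>2 * (- z) ^ k)
      = z ^ (2 * M * M) * (((- z) ^ k)\<^sup>2 * (- z) ^ k) * (p ^ triangular k)\<^sup>2 * D"
    unfolding qz D_def by (simp add: power_mult_distrib power_divide ac_simps)
  also have "\<dots> = (- 1) ^ k * p ^ triangular k * ((- r) ^ m * p ^ triangular m) * D"
    unfolding p_def r_def minus_minus by (simp only: qsum_term_power_identity [OF root M])
  also have "\<dots> = coeff (\<Prod>j<M. [:1, - (1 * p ^ j):]) k * coeff (\<Prod>j<M. [:1, - (r * p ^ j):]) m"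
    unfolding cA cB D_def by (simp add: power2_eq_square ac_simps)
  finally show ?thesis
    by (simp only: m_def)
qed

theorem qsum_root_of_unity:
  fixes z :: "'a::field"
  defines "p \<equiv> z ^ 4" and "r \<equiv> - (z\<^sup>2)"
  assumes root: "z ^ (4 * M + 1) = 1" and nonzero: "\<And>k. k \<le> M \<Longrightarrow> qpochhammer p p k \<noteq> 0"
  shows "z ^ (2 * M * M) * qsum z (Suc M) * (qpochhammer r r M)\<^sup>2
    = (- 1) ^ triangular (Suc M) * z ^ (2 * triangular M) * qpochhammer r r (2 * M)"
proof -
  define A where "A = (\<Prod>j<M. [:1, - (1 * p ^ j):])"
  define B where "B = (\<Prod>j<M. [:1, - (r * p ^ j):])"
  define C where "C = (\<Prod>i<2 * M. [:1, - (1 * r ^ i):])"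
  have "C = (\<Prod>j<M. [:1, - (1 * r ^ (2 * j)):] * [:1, - (1 * r ^ (2 * j + 1)):])"
    unfolding C_def by (rule prod_lessThan_double)
  also have "\<dots> = A * B"
    by (simp add: A_def B_def r_def p_def power_mult_distrib algebra_simps
        flip: prod.distrib power_mult)
  finally have C: "C = A * B" .
  have "z ^ (2 * M * M) * qsum z (Suc M) = (\<Sum>k\<le>M. coeff A k * coeff B (M - k))"
    unfolding qsum_def sum_distrib_left lessThan_Suc_atMost A_def B_def p_def r_def
    by (intro sum.cong refl qsum_term_root_of_unity root) (use nonzero in \<open>auto simp: p_def\<close>)
  also have "\<dots> = coeff C M"
    by (simp add: C coeff_mult)
  finally have "z ^ (2 * M * M) * qsum z (Suc M) = coeff C M" .
  moreover have "(- 1) ^ M * r ^ triangular M = (- 1) ^ triangular (Suc M) * z ^ (2 * triangular M)"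
    by (simp add: r_def power_minus' power_mult triangular_Suc power_add)
  ultimately show ?thesis
    using q_binomial [of M "2 * M" 1 r] by (simp add: C_def power2_eq_square mult.assoc)
qed

section \<open>Even and odd truncation points\<close>

lemma qpochhammer_neg_square_even:
  fixes z :: "'a::comm_ring_1"
  defines "p \<equiv> z ^ 4" and "r \<equiv> - (z\<^sup>2)"
  shows "qpochhammer r r (2 * K) = qpochhammer r p K * qpochhammer p p K"
    and "qpochhammer r r (4 * K)
      = qpochhammer r p K * qpochhammer (r * p ^ K) p K
        * (qpochhammer p p K * qpochhammer (p ^ Suc K) p K)"
proof -
  have r2: "r\<^sup>2 = p"
    by (simp add: r_def p_def flip: power_mult)
  show "qpochhammer r r (2 * K) = qpochhammer r p K * qpochhammer p p K"
    using qpochhammer_double [of r K] by (simp add: r2)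
  have "qpochhammer r r (4 * K) = qpochhammer r p (K + K) * qpochhammer p p (K + K)"
    using qpochhammer_double [of r "2 * K"] by (simp add: r2 flip: mult_2)
  then show "qpochhammer r r (4 * K)
      = qpochhammer r p K * qpochhammer (r * p ^ K) p K
        * (qpochhammer p p K * qpochhammer (p ^ Suc K) p K)"
    by (simp only: qpochhammer_add power_Suc)
qed

lemma qpochhammer_neg_square_odd:
  fixes z :: "'a::comm_ring_1"
  defines "p \<equiv> z ^ 4" and "r \<equiv> - (z\<^sup>2)"
  shows "qpochhammer r r (2 * K + 1)
      = qpochhammer r p K * qpochhammer p p K * (1 + z ^ (4 * K + 2))"
    and "qpochhammer r r (4 * K + 2)
      = qpochhammer r p K * (1 + z ^ (4 * K + 2)) * qpochhammer (r * p ^ Suc K) p K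
        * (qpochhammer p p K * qpochhammer (p ^ Suc K) p (Suc K))"
proof -
  have r2: "r\<^sup>2 = p"
    by (simp add: r_def p_def flip: power_mult)
  have rp: "r * p ^ K = - (z ^ (4 * K + 2))"
    by (simp add: r_def p_def power_power_swap power_add power_mult power_numeral_reduce
        algebra_simps)
  then show "qpochhammer r r (2 * K + 1)
      = qpochhammer r p K * qpochhammer p p K * (1 + z ^ (4 * K + 2))"
    using qpochhammer_double [of r K] by (simp add: qpochhammer_Suc r2 power_mult)
  have "qpochhammer r r (4 * K + 2) = qpochhammer r p (K + Suc K) * qpochhammer p p (K + Suc K)"
    using qpochhammer_double [of r "2 * K + 1"] by (simp add: r2 flip: mult_2)
  also have "\<dots> = qpochhammer r p K * ((1 - r * p ^ K) * qpochhammer (r * p ^ Suc K) p K)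
      * (qpochhammer p p K * qpochhammer (p ^ Suc K) p (Suc K))"
    by (simp only: qpochhammer_add qpochhammer_Suc_left power_Suc ac_simps)
  finally show "qpochhammer r r (4 * K + 2) = qpochhammer r p K * (1 + z ^ (4 * K + 2))
      * qpochhammer (r * p ^ Suc K) p K * (qpochhammer p p K * qpochhammer (p ^ Suc K) p (Suc K))"
    by (simp only: rp diff_minus_eq_add mult.assoc)
qed

lemma qpochhammer_fourth_power_double:
  fixes z :: "'a::comm_ring_1"
  shows "qpochhammer (z ^ 4) (z ^ 4) (2 * K)
    = qpochhammer (z\<^sup>2) (z ^ 4) K * qpochhammer (- (z\<^sup>2)) (z ^ 4) K
      * (qpochhammer (z ^ 4) (z ^ 4) K * qpochhammer (- (z ^ 4)) (z ^ 4) K)"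
  using qpochhammer_double [of "z ^ 4" K] qpochhammer_mult_uminus [of "z\<^sup>2" "z ^ 4" K]
    qpochhammer_mult_uminus [of "z ^ 4" "z ^ 4" K]
  by (simp flip: power_mult)

lemma qpochhammer_reverse_neg_square:
  fixes z :: "'a::idom"
  assumes "z ^ (4 * (m + K) + 1) = 1"
  shows "qpochhammer (- (z\<^sup>2) * (z ^ 4) ^ m) (z ^ 4) K * ((z ^ 3) ^ K * (z ^ 4) ^ triangular K)
    = qpochhammer (- (z ^ 3)) (z ^ 4) K"
proof -
  have "qpochhammer (- (z\<^sup>2) * (z ^ 4) ^ m) (z ^ 4) K * ((- (z ^ 3)) ^ K * (z ^ 4) ^ triangular K)
      = (- 1) ^ K * qpochhammer (- (z ^ 3)) (z ^ 4) K"
  proof (rule qpochhammer_reverse)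
    show "z ^ 4 \<noteq> 0"
      using assms by (cases "z = 0") (simp_all add: power_0_left)
    have "- (z\<^sup>2) * (z ^ 4) ^ m * - (z ^ 3) * (z ^ 4) ^ K = z ^ (4 * (m + K) + 1) * z ^ 4"
      by (simp add: power_power_swap power_add power_mult power_numeral_reduce algebra_simps)
    then show "- (z\<^sup>2) * (z ^ 4) ^ m * - (z ^ 3) * (z ^ 4) ^ K = z ^ 4"
      by (simp only: assms mult_1)
  qed
  then show ?thesis
    by (simp add: power_minus' ac_simps)
qed

lemma qpochhammer_reverse_root:
  fixes z :: "'a::idom"
  assumes "z ^ (4 * (m + K) + 1) = 1"
  shows "qpochhammer ((z ^ 4) ^ Suc m) (z ^ 4) K * (z ^ K * (z ^ 4) ^ triangular K)
    = (- 1) ^ K * qpochhammer z (z ^ 4) K"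
proof (rule qpochhammer_reverse)
  show "z ^ 4 \<noteq> 0"
    using assms by (cases "z = 0") (simp_all add: power_0_left)
  have "(z ^ 4) ^ Suc m * z * (z ^ 4) ^ K = z ^ (4 * (m + K) + 1) * z ^ 4"
    by (simp add: power_power_swap power_add power_mult power_numeral_reduce algebra_simps)
  then show "(z ^ 4) ^ Suc m * z * (z ^ 4) ^ K = z ^ 4"
    by (simp only: assms mult_1)
qed

text \<open>A division-free form of \<open>(r;r)_4K / (r;r)_2K ^ 2\<close> when \<open>z ^ (8K + 1) = 1\<close>.\<close>
lemma qpochhammer_ratio_even:
  fixes z :: "'a::idom"
  defines "p \<equiv> z ^ 4" and "r \<equiv> - (z\<^sup>2)"
  assumes root: "z ^ (8 * K + 1) = 1"
  shows "qpochhammer r r (4 * K) * qpochhammer p p (2 * K) * (z ^ (4 * K) * (p ^ triangular K)\<^sup>2)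
    = (- 1) ^ K * (qpochhammer z p K * qpochhammer (z\<^sup>2) p K * qpochhammer (- (z ^ 3)) p K
        * qpochhammer (- (z ^ 4)) p K) * (qpochhammer r r (2 * K))\<^sup>2"
proof -
  define P where "P a = qpochhammer a p K" for a
  have root': "z ^ (4 * (K + K) + 1) = 1"
    using root by simp
  have rev3: "P (r * p ^ K) * ((z ^ 3) ^ K * p ^ triangular K) = P (- (z ^ 3))"
    unfolding P_def p_def r_def by (rule qpochhammer_reverse_neg_square [OF root'])
  have rev1: "P (p ^ Suc K) * (z ^ K * p ^ triangular K) = (- 1) ^ K * P z"
    unfolding P_def p_def by (rule qpochhammer_reverse_root [OF root'])
  have double: "qpochhammer r r (2 * K) = P r * P p"
    unfolding P_def p_def r_def by (rule qpochhammer_neg_square_even(1))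
  have quadruple: "qpochhammer r r (4 * K) = P r * P (r * p ^ K) * (P p * P (p ^ Suc K))"
    unfolding P_def p_def r_def by (rule qpochhammer_neg_square_even(2))
  have split: "qpochhammer p p (2 * K) = P (z\<^sup>2) * P r * (P p * P (- (z ^ 4)))"
    unfolding P_def p_def r_def by (rule qpochhammer_fourth_power_double)
  have "z ^ (4 * K) = (z ^ 3) ^ K * z ^ K"
    by (simp flip: power_mult power_add)
  then have "qpochhammer r r (4 * K) * qpochhammer p p (2 * K) * (z ^ (4 * K) * (p ^ triangular K)\<^sup>2)
      = P r * P p * qpochhammer p p (2 * K) * (P (r * p ^ K) * ((z ^ 3) ^ K * p ^ triangular K))
        * (P (p ^ Suc K) * (z ^ K * p ^ triangular K))"
    unfolding quadruple by (simp add: power2_eq_square ac_simps)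
  also have "\<dots> = (- 1) ^ K * (P z * P (z\<^sup>2) * P (- (z ^ 3)) * P (- (z ^ 4))) * (P r * P p)\<^sup>2"
    unfolding split rev3 rev1 by (simp only: power2_eq_square ac_simps)
  finally show ?thesis
    unfolding double P_def .
qed

lemma qpochhammer_odd_root_identity:
  fixes z :: "'a::comm_ring_1"
  assumes root: "z ^ (8 * K + 5) = 1"
  shows "(1 - z\<^sup>2) * qpochhammer (z ^ 6) (z ^ 4) K * (z * (1 + z ^ (4 * K + 2)))
    = qpochhammer (z\<^sup>2) (z ^ 4) K * (z - 1)"
proof -
  have "z\<^sup>2 * z ^ 4 = z ^ 6" "z\<^sup>2 * (z ^ 4) ^ K = z ^ (4 * K + 2)"
    by (simp_all add: power_power_swap power_add power_mult power_numeral_reduce algebra_simps)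
  then have shift: "(1 - z\<^sup>2) * qpochhammer (z ^ 6) (z ^ 4) K
      = qpochhammer (z\<^sup>2) (z ^ 4) K * (1 - z ^ (4 * K + 2))"
    using qpochhammer_Suc_left [of "z\<^sup>2" "z ^ 4" K] qpochhammer_Suc [of "z\<^sup>2" "z ^ 4" K] by simp
  have "(1 - z ^ (4 * K + 2)) * (z * (1 + z ^ (4 * K + 2))) = z - z ^ (8 * K + 5)"
    by (simp add: power_power_swap power_add power_mult power_numeral_reduce algebra_simps)
  then have "(1 - z ^ (4 * K + 2)) * (z * (1 + z ^ (4 * K + 2))) = z - 1"
    by (simp only: root)
  then show ?thesis
    unfolding shift by (simp only: mult.assoc)
qed

text \<open>A division-free form of \<open>(r;r)_(4K+2) / (r;r)_(2K+1) ^ 2\<close> when \<open>z ^ (8K + 5) = 1\<close>.\<close>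
lemma qpochhammer_ratio_odd:
  fixes z :: "'a::idom"
  defines "p \<equiv> z ^ 4" and "r \<equiv> - (z\<^sup>2)"
  assumes root: "z ^ (8 * K + 5) = 1"
  shows "qpochhammer r r (4 * K + 2) * qpochhammer p p (2 * K)
      * (z ^ (4 * K + 1) * (p ^ triangular K * p ^ triangular (Suc K)))
    = (- 1) ^ K * z * (1 - z\<^sup>2) * (qpochhammer (- (z ^ 3)) p K * qpochhammer (- (z ^ 4)) p K
        * qpochhammer (z ^ 5) p K * qpochhammer (z ^ 6) p K) * (qpochhammer r r (2 * K + 1))\<^sup>2"
proof -
  define P where "P a = qpochhammer a p K" for a
  define w where "w = 1 + z ^ (4 * K + 2)"
  have root': "z ^ (4 * (Suc K + K) + 1) = 1" "z ^ (4 * (K + Suc K) + 1) = 1"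
    using root by (simp_all add: algebra_simps)
  have single: "qpochhammer r r (2 * K + 1) = P r * P p * w"
    unfolding P_def p_def r_def w_def by (rule qpochhammer_neg_square_odd(1))
  have double: "qpochhammer r r (4 * K + 2)
      = P r * w * P (r * p ^ Suc K) * (P p * qpochhammer (p ^ Suc K) p (Suc K))"
    unfolding P_def p_def r_def w_def by (rule qpochhammer_neg_square_odd(2))
  have split: "qpochhammer p p (2 * K) = P (z\<^sup>2) * P r * (P p * P (- (z ^ 4)))"
    unfolding P_def p_def r_def by (rule qpochhammer_fourth_power_double)
  have rev3: "P (r * p ^ Suc K) * ((z ^ 3) ^ K * p ^ triangular K) = P (- (z ^ 3))"
    unfolding P_def p_def r_def by (rule qpochhammer_reverse_neg_square [OF root'(1)])
  have rev1: "qpochhammer (p ^ Suc K) p (Suc K) * (z ^ Suc K * p ^ triangular (Suc K))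
      = (- 1) ^ Suc K * qpochhammer z p (Suc K)"
    unfolding p_def by (rule qpochhammer_reverse_root [OF root'(2)])
  have "z * p = z ^ 5"
    by (simp add: p_def flip: power_Suc)
  then have z1: "qpochhammer z p (Suc K) = (1 - z) * P (z ^ 5)"
    by (simp add: qpochhammer_Suc_left P_def)
  have identity: "(1 - z\<^sup>2) * P (z ^ 6) * (z * w) = P (z\<^sup>2) * (z - 1)"
    unfolding P_def p_def w_def by (rule qpochhammer_odd_root_identity [OF root])
  have "z ^ (4 * K + 1) = (z ^ 3) ^ K * z ^ Suc K"
    by (simp flip: power_mult power_add)
  then have "qpochhammer r r (4 * K + 2) * qpochhammer p p (2 * K)
      * (z ^ (4 * K + 1) * (p ^ triangular K * p ^ triangular (Suc K)))
    = P r * w * P p * qpochhammer p p (2 * K) * (P (r * p ^ Suc K) * ((z ^ 3) ^ K * p ^ triangular K))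
      * (qpochhammer (p ^ Suc K) p (Suc K) * (z ^ Suc K * p ^ triangular (Suc K)))"
    unfolding double by (simp only: ac_simps)
  also have "\<dots> = (- 1) ^ K * (P (- (z ^ 3)) * P (- (z ^ 4)) * P (z ^ 5)) * (P (z\<^sup>2) * (z - 1))
      * (P r * P p)\<^sup>2 * w"
    unfolding split rev3 rev1 z1 by (simp add: power2_eq_square algebra_simps)
  also have "\<dots> = (- 1) ^ K * ((1 - z\<^sup>2) * P (z ^ 6) * (z * w))
      * (P (- (z ^ 3)) * P (- (z ^ 4)) * P (z ^ 5)) * (P r * P p)\<^sup>2 * w"
    unfolding identity by (simp only: ac_simps)
  finally show ?thesis
    unfolding single by (simp only: P_def power2_eq_square ac_simps)
qed

lemma qsum_root_of_unity_even:
  fixes z :: "'a::field"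
  defines "p \<equiv> z ^ 4" and "r \<equiv> - (z\<^sup>2)"
  assumes root: "z ^ (8 * K + 1) = 1"
    and nonzero: "\<And>k. k \<le> 2 * K \<Longrightarrow> qpochhammer p p k \<noteq> 0" "qpochhammer r r (2 * K) \<noteq> 0"
  shows "qsum z (2 * K + 1) * z ^ (8 * K * K + 2 * K)
    = qpochhammer z p K * qpochhammer (z\<^sup>2) p K * qpochhammer (- (z ^ 3)) p K
      * qpochhammer (- (z ^ 4)) p K / qpochhammer p p (2 * K)"
proof -
  define t where "t = triangular (2 * K)"
  define S where "S = qsum z (2 * K + 1)"
  define X where "X = qpochhammer z p K * qpochhammer (z\<^sup>2) p K * qpochhammer (- (z ^ 3)) p K
      * qpochhammer (- (z ^ 4)) p K"
  define W where "W = z ^ (4 * K) * (p ^ triangular K)\<^sup>2"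
  have "z \<noteq> 0"
    using root by (cases "z = 0") (simp_all add: power_0_left)
  have "z ^ (4 * (2 * K) + 1) = 1"
    using root by (simp add: mult.assoc)
  then have "z ^ (2 * (2 * K) * (2 * K)) * qsum z (Suc (2 * K)) * (qpochhammer r r (2 * K))\<^sup>2
      = (- 1) ^ triangular (Suc (2 * K)) * z ^ (2 * t) * qpochhammer r r (2 * (2 * K))"
    unfolding p_def r_def t_def by (rule qsum_root_of_unity) (use nonzero(1) in \<open>simp add: p_def\<close>)
  moreover have "2 * (2 * K) * (2 * K) = 8 * K * K" and "2 * (2 * K) = 4 * K"
    by simp_all
  ultimately have main: "z ^ (8 * K * K) * S * (qpochhammer r r (2 * K))\<^sup>2
      = (- 1) ^ K * z ^ (2 * t) * qpochhammer r r (4 * K)"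
    by (simp only: S_def Suc_eq_plus1 minus_one_power_triangular)
  have "2 * t + (8 * K * K + 2 * K) = 8 * K * K + (4 * K + 4 * triangular K * 2)"
    using double_triangular [of "2 * K"] double_triangular [of K] by (simp add: t_def algebra_simps)
  then have exponent: "z ^ (2 * t) * z ^ (8 * K * K + 2 * K) = z ^ (8 * K * K) * W"
    unfolding W_def p_def by (simp only: power_add [symmetric]) (simp only: power_add power_mult)
  have ratio: "qpochhammer r r (4 * K) * qpochhammer p p (2 * K) * W
      = (- 1) ^ K * X * (qpochhammer r r (2 * K))\<^sup>2"
    unfolding W_def X_def p_def r_def by (rule qpochhammer_ratio_even [OF root])
  have "z ^ (2 * t) * (S * z ^ (8 * K * K + 2 * K) * qpochhammer p p (2 * K))
        * (qpochhammer r r (2 * K))\<^sup>2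
      = (z ^ (2 * t) * z ^ (8 * K * K + 2 * K)) * S * qpochhammer p p (2 * K)
        * (qpochhammer r r (2 * K))\<^sup>2"
    by (simp only: ac_simps)
  also have "\<dots> = (z ^ (8 * K * K) * S * (qpochhammer r r (2 * K))\<^sup>2)
      * (qpochhammer p p (2 * K) * W)"
    unfolding exponent by (simp only: ac_simps)
  also have "\<dots> = (- 1) ^ K * z ^ (2 * t) * (qpochhammer r r (4 * K) * qpochhammer p p (2 * K) * W)"
    unfolding main by (simp only: ac_simps)
  also have "\<dots> = z ^ (2 * t) * X * (qpochhammer r r (2 * K))\<^sup>2"
    unfolding ratio by (simp only: ac_simps left_minus_one_mult_self)
  finally have "S * z ^ (8 * K * K + 2 * K) * qpochhammer p p (2 * K) = X"
    using \<open>z \<noteq> 0\<close> nonzero(2) by simp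
  then show ?thesis
    using nonzero(1) [of "2 * K"] by (simp add: S_def X_def field_simps)
qed

lemma qsum_root_of_unity_odd:
  fixes z :: "'a::field"
  defines "p \<equiv> z ^ 4" and "r \<equiv> - (z\<^sup>2)"
  assumes root: "z ^ (8 * K + 5) = 1"
    and nonzero: "\<And>k. k \<le> 2 * K + 1 \<Longrightarrow> qpochhammer p p k \<noteq> 0" "qpochhammer r r (2 * K + 1) \<noteq> 0"
  shows "qsum z (2 * K + 2) * z ^ (8 * K * K + 10 * K + 2)
    = - ((1 - z\<^sup>2) * qpochhammer (- (z ^ 3)) p K * qpochhammer (- (z ^ 4)) p K
      * qpochhammer (z ^ 5) p K * qpochhammer (z ^ 6) p K / qpochhammer p p (2 * K))"
proof -
  define M where "M = 2 * K + 1"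
  define t where "t = triangular M"
  define S where "S = qsum z (2 * K + 2)"
  define Y where "Y = qpochhammer (- (z ^ 3)) p K * qpochhammer (- (z ^ 4)) p K
      * qpochhammer (z ^ 5) p K * qpochhammer (z ^ 6) p K"
  define W where "W = z ^ (4 * K + 1) * (p ^ triangular K * p ^ triangular (Suc K))"
  have "z \<noteq> 0"
    using root by (cases "z = 0") (simp_all add: power_0_left)
  have "z ^ (4 * M + 1) = 1"
    using root by (simp add: M_def algebra_simps)
  then have "z ^ (2 * M * M) * qsum z (Suc M) * (qpochhammer r r M)\<^sup>2
      = (- 1) ^ triangular (Suc M) * z ^ (2 * t) * qpochhammer r r (2 * M)"
    unfolding p_def r_def t_def
    by (rule qsum_root_of_unity) (use nonzero(1) in \<open>simp add: p_def M_def\<close>)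
  moreover have "Suc M = 2 * K + 2" and "2 * M = 4 * K + 2"
    by (simp_all add: M_def)
  ultimately have main: "z ^ (2 * M * M) * S * (qpochhammer r r M)\<^sup>2
      = - ((- 1) ^ K * z ^ (2 * t) * qpochhammer r r (4 * K + 2))"
    by (simp only: S_def minus_one_power_triangular mult_minus_left)
  have "2 * t + (1 + (8 * K * K + 10 * K + 2))
      = 2 * M * M + (4 * K + 1 + (4 * triangular K + 4 * triangular (Suc K)))"
    using double_triangular [of M] double_triangular [of K]
    by (simp add: t_def M_def triangular_Suc algebra_simps)
  then have exponent: "z ^ (2 * t) * (z * z ^ (8 * K * K + 10 * K + 2)) = z ^ (2 * M * M) * W"
    unfolding W_def p_def
    by (simp only: power_add [symmetric] power_Suc [symmetric] Suc_eq_plus1 add.commute)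
      (simp only: power_add power_mult)
  have ratio: "qpochhammer r r (4 * K + 2) * qpochhammer p p (2 * K) * W
      = (- 1) ^ K * z * (1 - z\<^sup>2) * Y * (qpochhammer r r M)\<^sup>2"
    unfolding W_def Y_def M_def p_def r_def by (rule qpochhammer_ratio_odd [OF root])
  have "z ^ (2 * t) * (z * (S * z ^ (8 * K * K + 10 * K + 2) * qpochhammer p p (2 * K)))
        * (qpochhammer r r M)\<^sup>2
      = (z ^ (2 * t) * (z * z ^ (8 * K * K + 10 * K + 2))) * S * qpochhammer p p (2 * K)
        * (qpochhammer r r M)\<^sup>2"
    by (simp only: ac_simps)
  also have "\<dots> = (z ^ (2 * M * M) * S * (qpochhammer r r M)\<^sup>2) * (qpochhammer p p (2 * K) * W)"
    unfolding exponent by (simp only: ac_simps)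
  also have "\<dots> = - ((- 1) ^ K * z ^ (2 * t)
      * (qpochhammer r r (4 * K + 2) * qpochhammer p p (2 * K) * W))"
    unfolding main by (simp only: ac_simps mult_minus_left mult_minus_right)
  also have "\<dots> = z ^ (2 * t) * (z * ((z\<^sup>2 - 1) * Y)) * (qpochhammer r r M)\<^sup>2"
    unfolding ratio by (simp add: algebra_simps)
  finally have "S * z ^ (8 * K * K + 10 * K + 2) * qpochhammer p p (2 * K) = (z\<^sup>2 - 1) * Y"
    using \<open>z \<noteq> 0\<close> nonzero(2) by (simp add: M_def)
  then show ?thesis
    using nonzero(1) [of "2 * K"] by (simp add: S_def Y_def field_simps)
qed

section \<open>Primitive roots of unity of odd order\<close>

lemma qsum_terminates:
  fixes z :: "'a::field"
  assumes "z ^ (4 * M + 1) = 1" and "M < N"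
  shows "qsum z N = qsum z (Suc M)"
  unfolding qsum_def
proof (rule sum.mono_neutral_right)
  have "1 - z * (z ^ 4) ^ M = 0"
    using assms(1) by (simp flip: power_mult power_Suc)
  then have "qpochhammer z (z ^ 4) k = 0" if "M < k" for k
    using that by (auto simp: qpochhammer_def)
  then show "\<forall>k\<in>{..<N} - {..<Suc M}.
      (qpochhammer z (z ^ 4) k)\<^sup>2 / (qpochhammer (z ^ 4) (z ^ 4) k)\<^sup>2 * (- z) ^ k = 0"
    by auto
qed (use assms(2) in auto)

lemma root_of_unity_power_int_cong:
  fixes x :: "'a::field"
  assumes "x ^ n = 1" and "int n dvd a - b"
  shows "x powi a = x powi b"
proof -
  obtain s where "a - b = int n * s"
    using assms(2) by (rule dvdE)
  then have s: "a = b + int n * s"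
    by simp
  show ?thesis
  proof (cases "x = 0")
    case True
    then have "n = 0"
      using assms(1) by (cases n) auto
    then show ?thesis
      using s by simp
  next
    case False
    then show ?thesis
      using assms(1) by (simp add: s power_int_add power_int_mult)
  qed
qed

lemma odd_dvd_eighth_diff_squares:
  assumes "odd n" and "n dvd m" and "8 * x = int m ^ 2 - int n ^ 2"
  shows "int n dvd x"
proof -
  have "int n dvd 8 * x"
    using assms(2,3) by (simp add: power2_eq_square)
  moreover have "coprime (int n) 8"
    using assms(1) coprime_power_right_iff [of "int n" 2 3] by simp
  ultimately show ?thesis
    using coprime_dvd_mult_right_iff by blast
qed

lemma power_int_eq_inverse_power:
  fixes z :: "'a::field"
  assumes "odd n" and "z ^ n = 1" and "n dvd m" and "8 * (e + int N) = int m ^ 2 - int n ^ 2"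
  shows "z powi e = inverse (z ^ N)"
proof -
  have "int n dvd e - - int N"
    using odd_dvd_eighth_diff_squares [OF assms(1,3,4)] by simp
  then have "z powi e = z powi - int N"
    by (rule root_of_unity_power_int_cong [OF assms(2)])
  then show ?thesis
    by (simp only: power_int_minus power_int_of_nat)
qed

lemma odd_square_mod_eight:
  assumes "odd n"
  shows "8 * ((1 - int n ^ 2) div 8) = 1 - int n ^ 2"
    and "8 * ((9 - int n ^ 2) div 8) = 9 - int n ^ 2"
proof -
  have "odd (int n)"
    using assms by simp
  then have "int n mod 8 = 1 \<or> int n mod 8 = 3 \<or> int n mod 8 = 5 \<or> int n mod 8 = 7"
    by presburger
  moreover have "int n ^ 2 mod 8 = (int n mod 8) ^ 2 mod 8"
    by (simp add: power_mod)
  ultimately have "int n ^ 2 mod 8 = 1"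
    by auto
  then show "8 * ((1 - int n ^ 2) div 8) = 1 - int n ^ 2"
    and "8 * ((9 - int n ^ 2) div 8) = 9 - int n ^ 2"
    by presburger+
qed

lemma qpochhammer_primitive_root_nonzero:
  fixes z :: "'a::idom"
  assumes "odd n" and order: "\<And>m. z ^ m = 1 \<longleftrightarrow> n dvd m" and "k < n"
  shows "qpochhammer (z ^ 4) (z ^ 4) k \<noteq> 0" and "qpochhammer (- (z\<^sup>2)) (- (z\<^sup>2)) k \<noteq> 0"
proof -
  have "coprime n 4"
    using \<open>odd n\<close> coprime_power_right_iff [of n 2 2] by simp
  then have z4: "(z ^ 4) ^ j \<noteq> 1" if "0 < j" "j \<le> k" for j
    using that \<open>k < n\<close> order [of "4 * j"] coprime_dvd_mult_right_iff [of n 4 j]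
    by (auto simp: power_mult dest: dvd_imp_le)
  moreover have "(- (z\<^sup>2)) ^ j \<noteq> 1" if "0 < j" "j \<le> k" for j
  proof
    assume "(- (z\<^sup>2)) ^ j = 1"
    moreover have "(z ^ 4) ^ j = ((- (z\<^sup>2)) ^ j)\<^sup>2"
      by (simp add: power_power_swap [of _ j 2] flip: power_mult)
    ultimately show False
      using z4 that by simp
  qed
  ultimately show "qpochhammer (z ^ 4) (z ^ 4) k \<noteq> 0" and "qpochhammer (- (z\<^sup>2)) (- (z\<^sup>2)) k \<noteq> 0"
    by (auto intro!: qpochhammer_self_nonzero)
qed

lemma qsum_primitive_root_even:
  fixes z :: "'a::field"
  assumes "odd n" and order: "\<And>m. z ^ m = 1 \<longleftrightarrow> n dvd m" and "n dvd 8 * K + 1" and "2 * K < n"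
    and e: "8 * e = 1 - int n ^ 2"
  shows "qsum z n = qpochhammer z (z ^ 4) K * qpochhammer (z\<^sup>2) (z ^ 4) K
      * qpochhammer (- (z ^ 3)) (z ^ 4) K * qpochhammer (- (z ^ 4)) (z ^ 4) K
      / qpochhammer (z ^ 4) (z ^ 4) (2 * K) * z powi e"
proof -
  have root: "z ^ (8 * K + 1) = 1"
    using order assms(3) by blast
  note nonzero = qpochhammer_primitive_root_nonzero [OF \<open>odd n\<close> order]
  have "z \<noteq> 0"
    using root by (cases "z = 0") (simp_all add: power_0_left)
  have "qsum z n = qsum z (2 * K + 1)"
    using qsum_terminates [of z "2 * K" n] root \<open>2 * K < n\<close> by (simp add: mult.assoc)
  also have "\<dots> * z ^ (8 * K * K + 2 * K)
      = qpochhammer z (z ^ 4) K * qpochhammer (z\<^sup>2) (z ^ 4) K * qpochhammer (- (z ^ 3)) (z ^ 4) K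
        * qpochhammer (- (z ^ 4)) (z ^ 4) K / qpochhammer (z ^ 4) (z ^ 4) (2 * K)"
    by (rule qsum_root_of_unity_even [OF root]) (use nonzero \<open>2 * K < n\<close> in auto)
  finally have eq: "qsum z n * z ^ (8 * K * K + 2 * K)
      = qpochhammer z (z ^ 4) K * qpochhammer (z\<^sup>2) (z ^ 4) K * qpochhammer (- (z ^ 3)) (z ^ 4) K
        * qpochhammer (- (z ^ 4)) (z ^ 4) K / qpochhammer (z ^ 4) (z ^ 4) (2 * K)" .
  have powi: "z powi e = inverse (z ^ (8 * K * K + 2 * K))"
    using order e by (intro power_int_eq_inverse_power [OF \<open>odd n\<close> _ assms(3)])
      (simp_all add: power2_eq_square algebra_simps)
  have solve: "S = W * inverse (z ^ (8 * K * K + 2 * K))"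
    if "S * z ^ (8 * K * K + 2 * K) = W" for S W
    using that \<open>z \<noteq> 0\<close> by (simp add: field_simps)
  show ?thesis
    unfolding powi by (rule solve [OF eq])
qed

lemma qsum_primitive_root_odd:
  fixes z :: "'a::field"
  assumes "odd n" and order: "\<And>m. z ^ m = 1 \<longleftrightarrow> n dvd m" and "n dvd 8 * K + 5" and "2 * K + 1 < n"
    and e: "8 * e = 9 - int n ^ 2"
  shows "qsum z n = - ((1 - z\<^sup>2) * qpochhammer (- (z ^ 3)) (z ^ 4) K
      * qpochhammer (- (z ^ 4)) (z ^ 4) K * qpochhammer (z ^ 5) (z ^ 4) K
      * qpochhammer (z ^ 6) (z ^ 4) K / qpochhammer (z ^ 4) (z ^ 4) (2 * K) * z powi e)"
proof -
  have root: "z ^ (8 * K + 5) = 1"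
    using order assms(3) by blast
  have "z \<noteq> 0"
    using root by (cases "z = 0") (simp_all add: power_0_left)
  note nonzero = qpochhammer_primitive_root_nonzero [OF \<open>odd n\<close> order]
  have "qsum z n = qsum z (2 * K + 2)"
    using qsum_terminates [of z "2 * K + 1" n] root \<open>2 * K + 1 < n\<close> by (simp add: algebra_simps)
  also have "\<dots> * z ^ (8 * K * K + 10 * K + 2)
      = - ((1 - z\<^sup>2) * qpochhammer (- (z ^ 3)) (z ^ 4) K
        * qpochhammer (- (z ^ 4)) (z ^ 4) K * qpochhammer (z ^ 5) (z ^ 4) K
        * qpochhammer (z ^ 6) (z ^ 4) K / qpochhammer (z ^ 4) (z ^ 4) (2 * K))"
    by (rule qsum_root_of_unity_odd [OF root]) (use nonzero \<open>2 * K + 1 < n\<close> in auto)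
  finally have eq: "qsum z n * z ^ (8 * K * K + 10 * K + 2)
      = - ((1 - z\<^sup>2) * qpochhammer (- (z ^ 3)) (z ^ 4) K
        * qpochhammer (- (z ^ 4)) (z ^ 4) K * qpochhammer (z ^ 5) (z ^ 4) K
        * qpochhammer (z ^ 6) (z ^ 4) K / qpochhammer (z ^ 4) (z ^ 4) (2 * K))" .
  have powi: "z powi e = inverse (z ^ (8 * K * K + 10 * K + 2))"
    using order e by (intro power_int_eq_inverse_power [OF \<open>odd n\<close> _ assms(3)])
      (simp_all add: power2_eq_square algebra_simps)
  have solve: "S = - (W * inverse (z ^ (8 * K * K + 10 * K + 2)))"
    if "S * z ^ (8 * K * K + 10 * K + 2) = - W" for S W
    using that \<open>z \<noteq> 0\<close> by (simp add: field_simps)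
  show ?thesis
    unfolding powi by (rule solve [OF eq])
qed

definition qsum_closed_form :: "'a::field \<Rightarrow> nat \<Rightarrow> 'a" where
  "qsum_closed_form q n =
    (if n mod 8 = 1 then
       qpochhammer q (q^4) ((n-1) div 8) * qpochhammer (q^2) (q^4) ((n-1) div 8)
       * qpochhammer (-(q^3)) (q^4) ((n-1) div 8) * qpochhammer (-(q^4)) (q^4) ((n-1) div 8)
       / qpochhammer (q^4) (q^4) ((n-1) div 4) * q powi ((1 - int n ^ 2) div 8)
     else if n mod 8 = 3 then
       qpochhammer q (q^4) ((3*n-1) div 8) * qpochhammer (q^2) (q^4) ((3*n-1) div 8)
       * qpochhammer (-(q^3)) (q^4) ((3*n-1) div 8) * qpochhammer (-(q^4)) (q^4) ((3*n-1) div 8)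
       / qpochhammer (q^4) (q^4) ((3*n-1) div 4) * q powi ((1 - int n ^ 2) div 8)
     else if n mod 8 = 5 then
       - ((1 - q^2) * qpochhammer (-(q^3)) (q^4) ((n-5) div 8) * qpochhammer (-(q^4)) (q^4) ((n-5) div 8)
          * qpochhammer (q^5) (q^4) ((n-5) div 8) * qpochhammer (q^6) (q^4) ((n-5) div 8)
          / qpochhammer (q^4) (q^4) ((n-5) div 4) * q powi ((9 - int n ^ 2) div 8))
     else
       - ((1 - q^2) * qpochhammer (-(q^3)) (q^4) ((3*n-5) div 8) * qpochhammer (-(q^4)) (q^4) ((3*n-5) div 8)
          * qpochhammer (q^5) (q^4) ((3*n-5) div 8) * qpochhammer (q^6) (q^4) ((3*n-5) div 8)
          / qpochhammer (q^4) (q^4) ((3*n-5) div 4) * q powi ((9 - int n ^ 2) div 8)))"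

theorem qsum_eq_closed_form:
  fixes z :: "'a::field"
  assumes "odd n" and order: "\<And>m. z ^ m = 1 \<longleftrightarrow> n dvd m"
  shows "qsum z n = qsum_closed_form z n"
proof -
  note even = qsum_primitive_root_even [OF \<open>odd n\<close> order _ _ odd_square_mod_eight(1) [OF \<open>odd n\<close>]]
  note odd = qsum_primitive_root_odd [OF \<open>odd n\<close> order _ _ odd_square_mod_eight(2) [OF \<open>odd n\<close>]]
  have "n mod 8 = 1 \<or> n mod 8 = 3 \<or> n mod 8 = 5 \<or> n mod 8 = 7"
    using \<open>odd n\<close> by presburger
  then consider (r1) "n mod 8 = 1" | (r3) "n mod 8 = 3" | (r5) "n mod 8 = 5" | (r7) "n mod 8 = 7"
    by blast
  then show ?thesis
  proof cases
    case r1
    then obtain t where n: "n = 8 * t + 1"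
      by (metis div_mult_mod_eq mult.commute)
    have "n dvd 8 * t + 1" "2 * t < n"
      by (simp_all add: n)
    then show ?thesis
      using even [of t] by (simp add: qsum_closed_form_def n)
  next
    case r3
    then obtain t where n: "n = 8 * t + 3"
      by (metis div_mult_mod_eq mult.commute)
    have "n dvd 8 * (3 * t + 1) + 1" "2 * (3 * t + 1) < n"
      by (auto simp: n intro: dvdI [of _ _ 3])
    then show ?thesis
      using even [of "3 * t + 1"] by (simp add: qsum_closed_form_def n)
  next
    case r5
    then obtain t where n: "n = 8 * t + 5"
      by (metis div_mult_mod_eq mult.commute)
    have "n dvd 8 * t + 5" "2 * t + 1 < n"
      by (simp_all add: n)
    then show ?thesis
      using odd [of t] by (simp add: qsum_closed_form_def n)
  next
    case r7
    then obtain t where n: "n = 8 * t + 7"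
      by (metis div_mult_mod_eq mult.commute)
    have "n dvd 8 * (3 * t + 2) + 5" "2 * (3 * t + 2) + 1 < n"
      and half: "(3 * n - 5) div 4 = 2 * (3 * t + 2)"
      by (auto simp: n intro: dvdI [of _ _ 3])
    then show ?thesis
      using odd [of "3 * t + 2"] unfolding qsum_closed_form_def half by (simp add: n)
  qed
qed

section \<open>Evaluating rational functions\<close>

definition ratfun_eval_on :: "complex set \<Rightarrow> ratfun \<Rightarrow> (complex \<Rightarrow> complex) \<Rightarrow> bool" where
  "ratfun_eval_on Z x f \<longleftrightarrow>
     (\<exists>A B. B \<noteq> 0 \<and> x = Fract A B \<and> (\<forall>c\<in>Z. poly B c \<noteq> 0 \<and> f c = poly A c / poly B c))"

lemma ratfun_eval_on_zero: "ratfun_eval_on Z 0 (\<lambda>_. 0)"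
  unfolding ratfun_eval_on_def by (intro exI [of _ 0] exI [of _ 1]) (simp add: Zero_fract_def)

lemma ratfun_eval_on_one: "ratfun_eval_on Z 1 (\<lambda>_. 1)"
  unfolding ratfun_eval_on_def by (intro exI [of _ 1] exI [of _ 1]) (simp add: One_fract_def)

lemma ratfun_eval_on_qvar: "ratfun_eval_on Z qvar (\<lambda>c. c)"
  unfolding ratfun_eval_on_def qvar_def by (intro exI [of _ "[:0, 1:]"] exI [of _ 1]) simp

lemma ratfun_eval_on_add:
  assumes "ratfun_eval_on Z x f" and "ratfun_eval_on Z y g"
  shows "ratfun_eval_on Z (x + y) (\<lambda>c. f c + g c)"
proof -
  obtain A B C D where "B \<noteq> 0" "x = Fract A B" "\<forall>c\<in>Z. poly B c \<noteq> 0 \<and> f c = poly A c / poly B c"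
    and "D \<noteq> 0" "y = Fract C D" "\<forall>c\<in>Z. poly D c \<noteq> 0 \<and> g c = poly C c / poly D c"
    using assms unfolding ratfun_eval_on_def by blast
  then show ?thesis
    unfolding ratfun_eval_on_def
    by (intro exI [of _ "A * D + C * B"] exI [of _ "B * D"]) (simp add: add_frac_eq)
qed

lemma ratfun_eval_on_mult:
  assumes "ratfun_eval_on Z x f" and "ratfun_eval_on Z y g"
  shows "ratfun_eval_on Z (x * y) (\<lambda>c. f c * g c)"
proof -
  obtain A B C D where "B \<noteq> 0" "x = Fract A B" "\<forall>c\<in>Z. poly B c \<noteq> 0 \<and> f c = poly A c / poly B c"
    and "D \<noteq> 0" "y = Fract C D" "\<forall>c\<in>Z. poly D c \<noteq> 0 \<and> g c = poly C c / poly D c"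
    using assms unfolding ratfun_eval_on_def by blast
  then show ?thesis
    unfolding ratfun_eval_on_def by (intro exI [of _ "A * C"] exI [of _ "B * D"]) simp
qed

lemma ratfun_eval_on_uminus:
  assumes "ratfun_eval_on Z x f"
  shows "ratfun_eval_on Z (- x) (\<lambda>c. - f c)"
proof -
  obtain A B where "B \<noteq> 0" "x = Fract A B" "\<forall>c\<in>Z. poly B c \<noteq> 0 \<and> f c = poly A c / poly B c"
    using assms unfolding ratfun_eval_on_def by blast
  then show ?thesis
    unfolding ratfun_eval_on_def by (intro exI [of _ "- A"] exI [of _ B]) simp
qed

lemma ratfun_eval_on_diff:
  "ratfun_eval_on Z x f \<Longrightarrow> ratfun_eval_on Z y g \<Longrightarrow> ratfun_eval_on Z (x - y) (\<lambda>c. f c - g c)"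
  using ratfun_eval_on_add [OF _ ratfun_eval_on_uminus, of Z x f y g] by simp

lemma ratfun_eval_on_inverse:
  assumes "ratfun_eval_on Z x f" and "\<And>c. c \<in> Z \<Longrightarrow> f c \<noteq> 0"
  shows "ratfun_eval_on Z (inverse x) (\<lambda>c. inverse (f c))"
proof -
  obtain A B where AB: "B \<noteq> 0" "x = Fract A B" "\<forall>c\<in>Z. poly B c \<noteq> 0 \<and> f c = poly A c / poly B c"
    using assms(1) unfolding ratfun_eval_on_def by blast
  show ?thesis
  proof (cases "A = 0")
    case True
    then have "Z = {}"
      using AB assms(2) by auto
    moreover have "x = 0"
      using AB(1,2) True by (simp add: Zero_fract_def eq_fract)
    ultimately show ?thesis
      unfolding ratfun_eval_on_def by (intro exI [of _ 0] exI [of _ 1]) (simp flip: Zero_fract_def)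
  next
    case False
    then show ?thesis
      unfolding ratfun_eval_on_def using AB assms(2) by (intro exI [of _ B] exI [of _ A]) auto
  qed
qed

lemma ratfun_eval_on_divide:
  "ratfun_eval_on Z x f \<Longrightarrow> ratfun_eval_on Z y g \<Longrightarrow> (\<And>c. c \<in> Z \<Longrightarrow> g c \<noteq> 0) \<Longrightarrow>
    ratfun_eval_on Z (x / y) (\<lambda>c. f c / g c)"
  using ratfun_eval_on_mult [OF _ ratfun_eval_on_inverse] by (simp add: divide_inverse)

lemma ratfun_eval_on_power: "ratfun_eval_on Z x f \<Longrightarrow> ratfun_eval_on Z (x ^ k) (\<lambda>c. f c ^ k)"
  by (induction k) (simp_all add: ratfun_eval_on_one ratfun_eval_on_mult)

lemma ratfun_eval_on_power_int:
  assumes "ratfun_eval_on Z x f" and "\<And>c. c \<in> Z \<Longrightarrow> f c \<noteq> 0"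
  shows "ratfun_eval_on Z (x powi e) (\<lambda>c. f c powi e)"
  using ratfun_eval_on_power [OF assms(1)]
    ratfun_eval_on_power [OF ratfun_eval_on_inverse [OF assms]]
  by (simp add: power_int_def)

lemma ratfun_eval_on_sum:
  "(\<And>k. k < N \<Longrightarrow> ratfun_eval_on Z (x k) (f k)) \<Longrightarrow>
    ratfun_eval_on Z (\<Sum>k<(N::nat). x k) (\<lambda>c. \<Sum>k<N. f k c)"
  by (induction N) (simp_all add: ratfun_eval_on_zero ratfun_eval_on_add)

lemma ratfun_eval_on_qpochhammer:
  assumes "ratfun_eval_on Z a f" and "ratfun_eval_on Z b g"
  shows "ratfun_eval_on Z (qpochhammer a b k) (\<lambda>c. qpochhammer (f c) (g c) k)"
  unfolding qpochhammer_def
  by (induction k)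
    (simp_all add: assms ratfun_eval_on_one ratfun_eval_on_mult ratfun_eval_on_diff ratfun_eval_on_power)

lemma ratfun_eval_on_if:
  "ratfun_eval_on Z x f \<Longrightarrow> ratfun_eval_on Z y g \<Longrightarrow>
    ratfun_eval_on Z (if P then x else y) (\<lambda>c. if P then f c else g c)"
  by simp

lemma ratfun_eval_on_qsum_closed_form:
  assumes "0 < n" and nonzero: "\<And>c. c \<in> Z \<Longrightarrow> c \<noteq> 0"
    "\<And>c k. c \<in> Z \<Longrightarrow> k < n \<Longrightarrow> qpochhammer (c ^ 4) (c ^ 4) k \<noteq> 0"
  shows "ratfun_eval_on Z (qsum qvar n - qsum_closed_form qvar n)
    (\<lambda>c. qsum c n - qsum_closed_form c n)"
proof -
  have "(n - 1) div 4 < n" "(3 * n - 1) div 4 < n" "(n - 5) div 4 < n" "(3 * n - 5) div 4 < n"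
    using \<open>0 < n\<close> by auto
  then show ?thesis
    unfolding qsum_def qsum_closed_form_def
    by (intro ratfun_eval_on_diff ratfun_eval_on_sum ratfun_eval_on_if ratfun_eval_on_mult
        ratfun_eval_on_divide ratfun_eval_on_uminus ratfun_eval_on_power_int ratfun_eval_on_power
        ratfun_eval_on_qpochhammer ratfun_eval_on_qvar ratfun_eval_on_one)
      (auto simp: nonzero)
qed

lemma ratfun_cong_if_eval_vanishes:
  assumes "finite Z" and eval: "ratfun_eval_on Z (x - y) f" and vanish: "\<And>c. c \<in> Z \<Longrightarrow> f c = 0"
  shows "ratfun_cong x y (\<Prod>c\<in>Z. [:- c, 1:])"
proof -
  obtain A B where AB: "B \<noteq> 0" "x - y = Fract A B"
    and fraction: "\<forall>c\<in>Z. poly B c \<noteq> 0 \<and> f c = poly A c / poly B c"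
    using eval unfolding ratfun_eval_on_def by blast
  have linear_prime: "prime_elem [:- c, 1:]" for c :: complex
    by (rule prime_elem_linear_field_poly) simp
  have coprime: "coprime B (\<Prod>c\<in>Z. [:- c, 1:])"
  proof (rule prod_coprime_right)
    fix c assume "c \<in> Z"
    then have "\<not> [:- c, 1:] dvd B"
      using fraction by (simp flip: poly_eq_0_iff_dvd)
    then show "coprime B [:- c, 1:]"
      using prime_elem_imp_coprime [OF linear_prime] coprime_commute by blast
  qed
  have divides: "(\<Prod>c\<in>Z'. [:- c, 1:]) dvd A" if "finite Z'" "\<And>c. c \<in> Z' \<Longrightarrow> poly A c = 0" for Z'
    using that
  proof (induction Z' rule: finite_induct)
    case (insert c Z')
    have "\<not> [:- c, 1:] dvd (\<Prod>c\<in>Z'. [:- c, 1:])"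
      using insert.hyps by (simp add: poly_prod prod_zero_iff flip: poly_eq_0_iff_dvd)
    then have "coprime [:- c, 1:] (\<Prod>c\<in>Z'. [:- c, 1:])"
      by (rule prime_elem_imp_coprime [OF linear_prime])
    moreover have "[:- c, 1:] dvd A"
      using insert.prems by (simp flip: poly_eq_0_iff_dvd)
    moreover have "(\<Prod>c\<in>Z'. [:- c, 1:]) dvd A"
      using insert.IH insert.prems by blast
    ultimately show ?case
      unfolding prod.insert [OF insert.hyps] by (blast intro: divides_mult)
  qed simp
  have "poly A c = 0" if "c \<in> Z" for c
    using fraction vanish [OF that] that by auto
  then have "(\<Prod>c\<in>Z. [:- c, 1:]) dvd A"
    by (rule divides [OF \<open>finite Z\<close>])
  then show ?thesis
    unfolding ratfun_cong_def using AB coprime by blast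
qed

section \<open>Cyclotomic polynomials\<close>

definition primitive_roots :: "nat \<Rightarrow> complex set" where
  "primitive_roots n = (\<lambda>j. cis (2 * pi * real j / real n)) ` {j. 1 \<le> j \<and> j \<le> n \<and> coprime j n}"

lemma cis_root_power_eq_1_iff:
  assumes "0 < n" and "coprime j n"
  shows "cis (2 * pi * real j / real n) ^ m = 1 \<longleftrightarrow> n dvd m"
proof
  assume "n dvd m"
  then obtain s where "m = n * s" ..
  then have "real m * (2 * pi * real j / real n) = 2 * pi * real (j * s)"
    using \<open>0 < n\<close> by (simp add: field_simps)
  then show "cis (2 * pi * real j / real n) ^ m = 1"
    by (simp add: DeMoivre)
next
  assume "cis (2 * pi * real j / real n) ^ m = 1"
  then have "cos (real m * (2 * pi * real j / real n)) = 1"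
    by (simp add: DeMoivre complex_eq_iff)
  then obtain k :: int where "real m * (2 * pi * real j / real n) = of_int k * 2 * pi"
    using cos_one_2pi_int by blast
  then have "real (m * j) = of_int k * real n"
    using \<open>0 < n\<close> by (simp add: field_simps)
  then have "int (m * j) = k * int n"
    by (metis of_int_eq_iff of_int_mult of_int_of_nat_eq)
  then have "n dvd m * j"
    by (metis dvd_triv_right int_dvd_int_iff)
  then show "n dvd m"
    using \<open>coprime j n\<close> by (simp add: coprime_commute coprime_dvd_mult_left_iff)
qed

lemma primitive_roots_power_eq_1_iff:
  "0 < n \<Longrightarrow> c \<in> primitive_roots n \<Longrightarrow> c ^ m = 1 \<longleftrightarrow> n dvd m"
  unfolding primitive_roots_def using cis_root_power_eq_1_iff by blast

lemma inj_on_cis_root: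
  assumes "0 < n"
  shows "inj_on (\<lambda>j. cis (2 * pi * real j / real n)) {1..n}"
proof -
  define \<omega> where "\<omega> = cis (2 * pi * real 1 / real n)"
  have power: "cis (2 * pi * real j / real n) = \<omega> ^ j" for j
    by (simp add: \<omega>_def DeMoivre mult.commute)
  have "i = j" if "i \<in> {1..n}" "j \<in> {1..n}" "i \<le> j" "\<omega> ^ i = \<omega> ^ j" for i j
  proof -
    have "\<omega> ^ i * \<omega> ^ (j - i) = \<omega> ^ j"
      using \<open>i \<le> j\<close> by (simp flip: power_add)
    then have "\<omega> ^ i * \<omega> ^ (j - i) = \<omega> ^ i * 1"
      using \<open>\<omega> ^ i = \<omega> ^ j\<close> by simp
    then have "\<omega> ^ (j - i) = 1"
      by (simp add: \<omega>_def)
    then have "n dvd j - i"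
      using cis_root_power_eq_1_iff [OF assms, of 1] by (simp add: \<omega>_def)
    then show "i = j"
      using that by (auto dest: dvd_imp_le)
  qed
  then show ?thesis
    unfolding inj_on_def power by (metis linorder_le_cases)
qed

lemma cyclotomic_eq_prod_primitive_roots:
  assumes "0 < n"
  shows "cyclotomic n = (\<Prod>c\<in>primitive_roots n. [:- c, 1:])"
proof -
  have "inj_on (\<lambda>j. cis (2 * pi * real j / real n)) {j. 1 \<le> j \<and> j \<le> n \<and> coprime j n}"
    by (rule inj_on_subset [OF inj_on_cis_root [OF assms]]) auto
  then show ?thesis
    by (simp add: cyclotomic_def primitive_roots_def prod.reindex)
qed

theorem theorem4:
  fixes n :: nat
  assumes "n > 0" and "odd n"
  defines "q \<equiv> qvar"
  shows "ratfun_cong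
    (\<Sum>k<n. (qpoch q (q^4) k)^2 / (qpoch (q^4) (q^4) k)^2 * (-q)^k)
    (if n mod 8 = 1 then
       qpoch q (q^4) ((n-1) div 8) * qpoch (q^2) (q^4) ((n-1) div 8)
       * qpoch (-(q^3)) (q^4) ((n-1) div 8) * qpoch (-(q^4)) (q^4) ((n-1) div 8)
       / qpoch (q^4) (q^4) ((n-1) div 4) * q powi ((1 - int n ^ 2) div 8)
     else if n mod 8 = 3 then
       qpoch q (q^4) ((3*n-1) div 8) * qpoch (q^2) (q^4) ((3*n-1) div 8)
       * qpoch (-(q^3)) (q^4) ((3*n-1) div 8) * qpoch (-(q^4)) (q^4) ((3*n-1) div 8)
       / qpoch (q^4) (q^4) ((3*n-1) div 4) * q powi ((1 - int n ^ 2) div 8)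
     else if n mod 8 = 5 then
       - ((1 - q^2) * qpoch (-(q^3)) (q^4) ((n-5) div 8) * qpoch (-(q^4)) (q^4) ((n-5) div 8)
          * qpoch (q^5) (q^4) ((n-5) div 8) * qpoch (q^6) (q^4) ((n-5) div 8)
          / qpoch (q^4) (q^4) ((n-5) div 4) * q powi ((9 - int n ^ 2) div 8))
     else
       - ((1 - q^2) * qpoch (-(q^3)) (q^4) ((3*n-5) div 8) * qpoch (-(q^4)) (q^4) ((3*n-5) div 8)
          * qpoch (q^5) (q^4) ((3*n-5) div 8) * qpoch (q^6) (q^4) ((3*n-5) div 8)
          / qpoch (q^4) (q^4) ((3*n-5) div 4) * q powi ((9 - int n ^ 2) div 8)))
    (cyclotomic n)"
proof -
  have order: "c ^ m = 1 \<longleftrightarrow> n dvd m" if "c \<in> primitive_roots n" for c m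
    using primitive_roots_power_eq_1_iff [OF \<open>n > 0\<close> that] .
  have nonzero: "c \<noteq> 0" if "c \<in> primitive_roots n" for c
    using order [OF that, of n] \<open>n > 0\<close> by (auto simp: power_0_left)
  have denominator: "qpochhammer (c ^ 4) (c ^ 4) k \<noteq> 0" if "c \<in> primitive_roots n" "k < n" for c k
    using qpochhammer_primitive_root_nonzero(1) [OF \<open>odd n\<close> order [OF that(1)] that(2)] .
  have "ratfun_eval_on (primitive_roots n) (qsum qvar n - qsum_closed_form qvar n)
      (\<lambda>c. qsum c n - qsum_closed_form c n)"
    using \<open>n > 0\<close> nonzero denominator by (rule ratfun_eval_on_qsum_closed_form)
  then have "ratfun_cong (qsum qvar n) (qsum_closed_form qvar n) (cyclotomic n)"
    unfolding cyclotomic_eq_prod_primitive_roots [OF \<open>n > 0\<close>]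
    by (rule ratfun_cong_if_eval_vanishes [rotated])
      (simp_all add: qsum_eq_closed_form [OF \<open>odd n\<close> order] primitive_roots_def)
  then show ?thesis
    by (simp only: q_def qsum_def qsum_closed_form_def qpoch_eq_qpochhammer)
qed

end
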